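(* Let $\varepsilon\in(0,1)$ and $\alpha=\frac{\varepsilon}{1+\varepsilon}$. Consider the predator–prey system with simultaneous harvesting of both species $$\dot X=(2-Y-U)X,\qquad \dot Y=(X-U)Y,$$ on $\{X>0,Y>0\}$, under the feedback $U=1+\varepsilon(Y-1)$ (so that the closed loop is $\dot X=-(1+\varepsilon)(Y-1)X$, $\dot Y=[X-1-\varepsilon(Y-1)]Y$). Define $$\Pi(X)=\frac{1}{X^{\alpha}}\Big[X-1-\frac{1+\varepsilon}{\varepsilon}\big(X^{\alpha}-1\big)\Big]$$ and $$V(X,Y)=\Psi(X)+(1+\varepsilon)\Psi(Y)+\Pi(X)+\Psi\!\Big(\frac{Y}{X^{\alpha}}\Big).$$ Then $\Pi(1)=0$ and $\Pi(X)>0$ for $X\in(0,1)\cup(1,\infty)$; $V$ is positive definite with respect to $(1,1)$ and radially unbounded on $\{X>0,Y>0\}$; and along the closed-loop solutions $$\dot V=-\frac{(X-1)\big(X^{\alpha}-1\big)}{X^{\alpha}}-(1+\varepsilon)\varepsilon(Y-1)^2,$$ which is negative definite on the quadrant. Hence $V$ is a strict CLF for the closed loop on $\{X>0,Y>0\}$.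
   Context: $\Psi(S)=S-1-\ln S$ for $S>0$. Radially unbounded on the quadrant means $V\to\infty$ as $(X,Y)$ approaches $\{X=0\}\cup\{Y=0\}$ or as $X+Y\to\infty$. *)

theory Defs
  imports "HOL-Analysis.Analysis"
begin

definition Psi :: "real \<Rightarrow> real" where
  "Psi S = S - 1 - ln S"

definition alpha :: "real \<Rightarrow> real" where
  "alpha eps = eps / (1 + eps)"

definition Pi_fun :: "real \<Rightarrow> real \<Rightarrow> real" where
  "Pi_fun eps X = (1 / X powr alpha eps) *
     (X - 1 - ((1 + eps) / eps) * (X powr alpha eps - 1))"

definition V :: "real \<Rightarrow> real \<Rightarrow> real \<Rightarrow> real" where
  "V eps X Y = Psi X + (1 + eps) * Psi Y + Pi_fun eps X + Psi (Y / X powr alpha eps)"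

definition gX :: "real \<Rightarrow> real \<Rightarrow> real \<Rightarrow> real" where
  "gX X Y U = (2 - Y - U) * X"

definition gY :: "real \<Rightarrow> real \<Rightarrow> real \<Rightarrow> real" where
  "gY X Y U = (X - U) * Y"

definition Ufb :: "real \<Rightarrow> real \<Rightarrow> real" where
  "Ufb eps Y = 1 + eps * (Y - 1)"

definition fX :: "real \<Rightarrow> real \<Rightarrow> real \<Rightarrow> real" where
  "fX eps X Y = gX X Y (Ufb eps Y)"

definition fY :: "real \<Rightarrow> real \<Rightarrow> real \<Rightarrow> real" where
  "fY eps X Y = gY X Y (Ufb eps Y)"

definition Vdot :: "real \<Rightarrow> real \<Rightarrow> real \<Rightarrow> real" where
  "Vdot eps X Y = - (X - 1) * (X powr alpha eps - 1) / X powr alpha eps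
                  - (1 + eps) * eps * (Y - 1)^2"

end

theory Submission
  imports Defs "HOL-Real_Asymp.Real_Asymp"
begin

text \<open>
  Both \<open>Psi\<close> and \<open>Pi_fun\<close> are nonnegative and vanish only at 1, the latter by the strict
  concavity bound \<open>X powr alpha - 1 < alpha * (X - 1)\<close>.  Hence \<open>V\<close> dominates
  \<open>max (Psi X) (Psi Y)\<close>, which gives positive definiteness and, since \<open>Psi\<close> blows up at 0 and
  at infinity, radial unboundedness.  Along the closed loop the orbital derivative is
  computed from the gradient of \<open>V\<close>; the mixed terms cancel because
  \<open>(1 + eps) * (1 - alpha) = 1\<close> and \<open>(1 + eps) * alpha = eps\<close>.
\<close>

lemma powr_minus_one_less:
  fixes a x :: real
  assumes a: "0 < a" "a < 1" and x: "0 < x" "x \<noteq> 1"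
  shows "x powr a - 1 < a * (x - 1)"
proof -
  define g where "g z = a * (z - 1) - (z powr a - 1)" for z :: real
  have g': "(g has_real_derivative a * (1 - z powr (a - 1))) (at z)" if "0 < z" for z
    unfolding g_def using that by (auto intro!: derivative_eq_intros simp: algebra_simps)
  have cont: "continuous_on {u..v} g" if "0 < u" for u v
    unfolding g_def using that by (intro continuous_intros) auto
  have "g 1 < g x"
  proof (cases "x < 1")
    case True
    show ?thesis
    proof (rule DERIV_neg_imp_decreasing_open[OF True _ cont[OF x(1)]])
      fix z assume z: "x < z" "z < 1"
      have "1 < z powr (a - 1)"
        using powr_less_mono2_neg[of "a - 1" z 1] z x a by simp
      then have "a * (1 - z powr (a - 1)) < 0"
        using a by (simp add: mult_pos_neg)
      then show "\<exists>d. (g has_real_derivative d) (at z) \<and> d < 0"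
        using g'[of z] z x by auto
    qed
  next
    case False
    then have "1 < x" using x by simp
    show ?thesis
    proof (rule DERIV_pos_imp_increasing_open[OF \<open>1 < x\<close> _ cont])
      fix z assume z: "1 < z" "z < x"
      have "z powr (a - 1) < 1"
        using powr_less_mono2_neg[of "a - 1" 1 z] z a by simp
      then have "0 < a * (1 - z powr (a - 1))"
        using a by simp
      then show "\<exists>d. (g has_real_derivative d) (at z) \<and> d > 0"
        using g'[of z] z by auto
    qed simp
  qed
  then show ?thesis by (simp add: g_def)
qed

lemma powr_sign_agree:
  fixes a x :: real
  assumes "0 < a" "0 < x" "x \<noteq> 1"
  shows "0 < (x - 1) * (x powr a - 1)"
proof (cases "x < 1")
  case True
  then have "x powr a < 1" using powr_less_mono2[of a x 1] assms by simp
  then show ?thesis using True by (simp add: mult_neg_neg)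
next
  case False
  then have "1 < x powr a" using powr_less_mono2[of a 1 x] assms by simp
  then show ?thesis using False assms by simp
qed

lemma powr_has_real_derivative_along:
  fixes x :: "real \<Rightarrow> real"
  assumes "(x has_real_derivative dX) (at t)" "0 < x t"
  shows "((\<lambda>s. x s powr a) has_real_derivative a * (x t powr a / x t) * dX) (at t)"
  using DERIV_fun_powr[OF assms, of a] assms(2) by (simp add: powr_diff)

lemma Psi_nonneg: "0 < S \<Longrightarrow> 0 \<le> Psi S"
  using ln_le_minus_one by (simp add: Psi_def)

lemma Psi_pos: "0 < S \<Longrightarrow> S \<noteq> 1 \<Longrightarrow> 0 < Psi S"
  using ln_le_minus_one ln_eq_minus_one by (force simp: Psi_def)

lemma Psi_large_near_zero_and_infinity:
  "\<exists>\<delta>>0. \<forall>S>0. S < \<delta> \<or> 1 / \<delta> < S \<longrightarrow> M < Psi S"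
proof -
  have "filterlim Psi at_top (at_right 0)" "filterlim Psi at_top at_top"
    unfolding Psi_def by real_asymp+
  then have "\<forall>\<^sub>F S in at_right 0. M < Psi S" "\<forall>\<^sub>F S in at_top. M < Psi S"
    by (simp_all add: filterlim_at_top_dense)
  then obtain d N where d: "0 < d" "\<And>S. 0 < S \<Longrightarrow> S < d \<Longrightarrow> M < Psi S"
    and N: "0 < N" "\<And>S. N \<le> S \<Longrightarrow> M < Psi S"
    unfolding eventually_at_right_field eventually_at_top_linorder
    by (metis gt_ex less_le_not_le nle_le order.strict_trans2)
  define \<delta> where "\<delta> = min d (1 / N)"
  have "0 < \<delta>" "\<delta> \<le> d" "N \<le> 1 / \<delta>"
    using d(1) N(1) by (auto simp: \<delta>_def min_def field_simps)
  then show ?thesis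
    using d N by (metis less_imp_le order.strict_trans2 order.trans)
qed

lemma alpha_pos: "0 < eps \<Longrightarrow> 0 < alpha eps"
  and alpha_less_one: "0 < eps \<Longrightarrow> alpha eps < 1"
  by (simp_all add: alpha_def)

lemma Pi_fun_eq:
  "0 < eps \<Longrightarrow> Pi_fun eps X = (X - 1 - (X powr alpha eps - 1) / alpha eps) / X powr alpha eps"
  by (simp add: Pi_fun_def alpha_def)

lemma Pi_fun_pos:
  assumes "0 < eps" "0 < X" "X \<noteq> 1"
  shows "0 < Pi_fun eps X"
proof -
  have "X powr alpha eps - 1 < alpha eps * (X - 1)"
    using powr_minus_one_less alpha_pos alpha_less_one assms by blast
  then have "(X powr alpha eps - 1) / alpha eps < X - 1"
    using alpha_pos[OF \<open>0 < eps\<close>] by (simp add: divide_less_eq mult.commute)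
  then show ?thesis
    using assms by (simp add: Pi_fun_eq)
qed

lemma Pi_fun_nonneg: "0 < eps \<Longrightarrow> 0 < X \<Longrightarrow> 0 \<le> Pi_fun eps X"
  using Pi_fun_pos[of eps X] by (cases "X = 1") (auto simp: Pi_fun_def)

lemma max_Psi_le_V:
  assumes "0 < eps" "0 < X" "0 < Y"
  shows "max (Psi X) (Psi Y) \<le> V eps X Y"
proof -
  have "0 \<le> Psi X" "0 \<le> Psi Y" "0 \<le> Pi_fun eps X" "0 \<le> Psi (Y / X powr alpha eps)"
    using Psi_nonneg Pi_fun_nonneg assms by simp_all
  moreover have "Psi Y \<le> (1 + eps) * Psi Y"
    using \<open>0 \<le> Psi Y\<close> \<open>0 < eps\<close> by (simp add: distrib_right)
  ultimately show ?thesis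
    unfolding V_def by linarith
qed

lemma V_pos:
  assumes "0 < eps" "0 < X" "0 < Y" "(X, Y) \<noteq> (1, 1)"
  shows "0 < V eps X Y"
  using max_Psi_le_V[OF assms(1-3)] Psi_pos assms by fastforce

lemma V_radially_unbounded:
  assumes "0 < eps"
  shows "\<exists>\<delta>>0. \<forall>X Y. 0 < X \<and> 0 < Y \<and> (X < \<delta> \<or> Y < \<delta> \<or> X + Y > 1 / \<delta>) \<longrightarrow> M < V eps X Y"
proof -
  obtain \<delta> where \<delta>: "0 < \<delta>" "\<And>S. 0 < S \<Longrightarrow> S < \<delta> \<or> 1 / \<delta> < S \<Longrightarrow> M < Psi S"
    using Psi_large_near_zero_and_infinity by blast
  have "M < V eps X Y"
    if "0 < X" "0 < Y" "X < \<delta> / 2 \<or> Y < \<delta> / 2 \<or> X + Y > 1 / (\<delta> / 2)" for X Y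
  proof -
    have "X < \<delta> \<or> Y < \<delta> \<or> 1 / \<delta> < X \<or> 1 / \<delta> < Y"
      using that \<delta>(1) by (auto simp: field_simps)
    then have "M < max (Psi X) (Psi Y)"
      using \<delta>(2) that by force
    then show ?thesis
      using max_Psi_le_V[OF assms that(1,2)] by linarith
  qed
  then show ?thesis
    using \<delta>(1) by (intro exI[of _ "\<delta> / 2"]) auto
qed

lemma Vdot_neg:
  assumes "0 < eps" "0 < X" "0 < Y" "(X, Y) \<noteq> (1, 1)"
  shows "Vdot eps X Y < 0"
proof -
  have Vdot: "Vdot eps X Y = - ((X - 1) * (X powr alpha eps - 1) / X powr alpha eps)
                              - (1 + eps) * eps * (Y - 1)\<^sup>2"
    by (simp only: Vdot_def mult_minus_left minus_divide_left)
  have "0 \<le> (1 + eps) * eps * (Y - 1)\<^sup>2"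
    using assms(1) by simp
  consider "X \<noteq> 1" | "X = 1" "Y \<noteq> 1"
    using assms(4) by blast
  then show ?thesis
  proof cases
    case 1
    then have "0 < (X - 1) * (X powr alpha eps - 1) / X powr alpha eps"
      using powr_sign_agree[OF alpha_pos] assms(1,2) by simp
    then show ?thesis
      using Vdot \<open>0 \<le> (1 + eps) * eps * (Y - 1)\<^sup>2\<close> by linarith
  next
    case 2
    then show ?thesis
      using assms(1) Vdot by simp
  qed
qed

definition V_dX :: "real \<Rightarrow> real \<Rightarrow> real \<Rightarrow> real" where
  "V_dX eps X Y = (1 - 1 / X) * (1 + (1 - alpha eps) / X powr alpha eps)
                  + alpha eps * (1 - Y / X powr alpha eps) / X"

definition V_dY :: "real \<Rightarrow> real \<Rightarrow> real \<Rightarrow> real" where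
  "V_dY eps X Y = (1 + eps) * (1 - 1 / Y) + 1 / X powr alpha eps - 1 / Y"

lemma V_has_real_derivative_along:
  fixes x y :: "real \<Rightarrow> real"
  assumes eps: "0 < eps"
    and x: "(x has_real_derivative dX) (at t)" and y: "(y has_real_derivative dY) (at t)"
    and pos: "0 < x t" "0 < y t"
  shows "((\<lambda>s. V eps (x s) (y s)) has_real_derivative
           V_dX eps (x t) (y t) * dX + V_dY eps (x t) (y t) * dY) (at t)"
proof -
  define a where "a = alpha eps"
  define p where "p s = x s powr a" for s
  have p: "(p has_real_derivative a * (p t / x t) * dX) (at t)"
    unfolding p_def by (rule powr_has_real_derivative_along[OF x pos(1)])
  have "0 < p t" "0 < a"
    using pos alpha_pos[OF eps] by (simp_all add: p_def a_def)
  have V_p: "V eps (x s) (y s) = Psi (x s) + (1 + eps) * Psi (y s)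
      + (x s - 1 - (p s - 1) / a) / p s + Psi (y s / p s)" for s
    using eps by (simp add: V_def Pi_fun_eq p_def a_def)
  have "((\<lambda>s. Psi (x s) + (1 + eps) * Psi (y s) + (x s - 1 - (p s - 1) / a) / p s + Psi (y s / p s))
     has_real_derivative ((1 - 1 / x t) * (1 + (1 - a) / p t) + a * (1 - y t / p t) / x t) * dX
         + ((1 + eps) * (1 - 1 / y t) + 1 / p t - 1 / y t) * dY) (at t)"
    unfolding Psi_def using pos \<open>0 < p t\<close> \<open>0 < a\<close>
    by (auto intro!: derivative_eq_intros x y p) (simp add: field_simps)
  then show ?thesis
    by (simp add: V_p V_dX_def V_dY_def p_def a_def)
qed

lemma orbital_derivative_V:
  assumes "0 < eps" "0 < X" "0 < Y"
  shows "V_dX eps X Y * fX eps X Y + V_dY eps X Y * fY eps X Y = Vdot eps X Y"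
proof -
  define a where "a = alpha eps"
  define P where "P = X powr a"
  have "0 < P" using assms by (simp add: P_def)
  have a: "(1 + eps) * (1 - a) = 1" "(1 + eps) * a = eps"
    using assms by (simp_all add: a_def alpha_def field_simps)
  have "V_dX eps X Y * fX eps X Y = - (Y - 1) * ((1 + eps) * (V_dX eps X Y * X))"
    by (simp add: fX_def gX_def Ufb_def algebra_simps)
  also have "\<dots> = - (Y - 1) * ((X - 1) * (1 + eps + (1 + eps) * (1 - a) / P) + (1 + eps) * a * (1 - Y / P))"
    using assms \<open>0 < P\<close> by (simp add: V_dX_def flip: a_def P_def) (simp add: field_simps)
  also have "\<dots> = - (Y - 1) * ((X - 1) * (1 + eps + 1 / P) + eps * (1 - Y / P))"
    by (simp only: a)
  finally have dX: "V_dX eps X Y * fX eps X Y = \<dots>" .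
  have "V_dY eps X Y * fY eps X Y = (X - 1 - eps * (Y - 1)) * ((1 + eps) * (Y - 1) + (Y - P) / P)"
    using assms \<open>0 < P\<close>
    by (simp add: V_dY_def fY_def gY_def Ufb_def flip: a_def P_def) (simp add: field_simps)
  with dX show ?thesis
    using \<open>0 < P\<close> by (simp add: Vdot_def flip: a_def P_def) (simp add: field_simps power2_eq_square)
qed

lemma V_has_real_derivative_closed_loop:
  fixes x y :: "real \<Rightarrow> real"
  assumes "0 < eps" "0 < x t" "0 < y t"
    and "(x has_real_derivative fX eps (x t) (y t)) (at t)"
    and "(y has_real_derivative fY eps (x t) (y t)) (at t)"
  shows "((\<lambda>s. V eps (x s) (y s)) has_real_derivative Vdot eps (x t) (y t)) (at t)"
  using V_has_real_derivative_along[OF assms(1,4,5,2,3)] orbital_derivative_V[OF assms(1-3)]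
  by simp

theorem theorem2:
  fixes eps :: real
  assumes "0 < eps" and "eps < 1"
  shows
    \<comment> \<open>properties of Pi\<close>
    "Pi_fun eps 1 = 0
     \<and> (\<forall>X. 0 < X \<and> X \<noteq> 1 \<longrightarrow> Pi_fun eps X > 0)
     \<comment> \<open>V positive definite w.r.t. (1,1) on the open quadrant\<close>
     \<and> V eps 1 1 = 0
     \<and> (\<forall>X Y. 0 < X \<and> 0 < Y \<and> (X, Y) \<noteq> (1, 1) \<longrightarrow> V eps X Y > 0)
     \<comment> \<open>radial unboundedness: V tends to infinity towards the axes or as X + Y tends to infinity\<close>
     \<and> (\<forall>M. \<exists>\<delta>>0. \<forall>X Y. 0 < X \<and> 0 < Y \<and> (X < \<delta> \<or> Y < \<delta> \<or> X + Y > 1 / \<delta>)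
            \<longrightarrow> V eps X Y > M)
     \<comment> \<open>derivative of V along closed-loop solutions\<close>
     \<and> (\<forall>x y :: real \<Rightarrow> real. \<forall>t.
          0 < x t \<and> 0 < y t
          \<and> (x has_real_derivative fX eps (x t) (y t)) (at t)
          \<and> (y has_real_derivative fY eps (x t) (y t)) (at t)
          \<longrightarrow> ((\<lambda>s. V eps (x s) (y s)) has_real_derivative Vdot eps (x t) (y t)) (at t))
     \<comment> \<open>Vdot negative definite on the quadrant\<close>
     \<and> Vdot eps 1 1 = 0
     \<and> (\<forall>X Y. 0 < X \<and> 0 < Y \<and> (X, Y) \<noteq> (1, 1) \<longrightarrow> Vdot eps X Y < 0)"
proof -
  have "Pi_fun eps 1 = 0" "V eps 1 1 = 0" "Vdot eps 1 1 = 0"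
    by (simp_all add: Pi_fun_def V_def Psi_def Vdot_def)
  with assms(1) show ?thesis
    by (intro conjI allI impI; (elim conjE)?)
      (simp_all add: Pi_fun_pos V_pos V_radially_unbounded V_has_real_derivative_closed_loop Vdot_neg)
qed

end
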